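(* Let $F$ be a continuous distribution function on $[0,\infty)$ with a density $f>0$ on $[0,\infty)$ and suppose $E(X^r)<\infty$ for some $r>2$, where $X\sim F$. Let $\lambda=f/\overline F$ be the hazard function. (a) Suppose $1/\lambda$ is differentiable on some interval $[x_0,\infty)$ and $\lim_{x\to\infty}\frac{d}{dx}(1/\lambda(x))=c<\infty$. Then $0\le c\le r^{-1}$; there exists $q\in\mathcal Q(\downarrow)$ such that $\sup_{x\ge0}\frac{\int_x^\infty q(F(t))\,dt/q(F(x))}{e(x)}<\infty$; and $$\lim_{x\to\infty}\frac{\sigma^2(x)}{e^2(x)}=\frac{1}{1-2c}.$$ (b) Suppose $\limsup_{x\to\infty}\overline F(x)^{1+\gamma}/f(x)<\infty$ for some $r^{-1}<\gamma<1/2$. Then there exists $q\in\mathcal Q(\downarrow)$ with $\int_0^\infty q(F(t))\,dt<\infty$ and $\sup_{x\ge0}e(x)q(F(x))<\infty$.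
   Context: $\overline F=1-F$; $e(x)=\int_x^\infty\overline F(t)\,dt/\overline F(x)$ is the mean residual life function; $\sigma^2(x)=\operatorname{Var}[X-x\mid X>x]$ is the residual variance function. $\mathcal Q(\downarrow)$ is the set of all continuous functions $q$ on $[0,1]$ that are monotone decreasing on $[0,1]$ and satisfy $\int_0^1 q(t)^{-2}\,dt<\infty$. Note that $F$ has finite variance since $r>2$. *)

theory Defs
  imports "HOL-Analysis.Analysis"
begin

definition survival :: "(real \<Rightarrow> real) \<Rightarrow> real \<Rightarrow> real" where
  "survival F x = 1 - F x"

definition mrl :: "(real \<Rightarrow> real) \<Rightarrow> real \<Rightarrow> real" where
  "mrl F x = integral {x..} (survival F) / survival F x"

text \<open>Residual variance function \<open>\<sigma>\<^sup>2(x) = Var[X - x | X > x]\<close> for a distribution with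
  density f: conditional second moment of \<open>X - x\<close> given \<open>X > x\<close> minus the square of the
  conditional mean \<open>e(x)\<close>.\<close>
definition resvar :: "(real \<Rightarrow> real) \<Rightarrow> (real \<Rightarrow> real) \<Rightarrow> real \<Rightarrow> real" where
  "resvar F f x = integral {x..} (\<lambda>t. (t - x)\<^sup>2 * f t) / survival F x - (mrl F x)\<^sup>2"

text \<open>The class Q(decreasing): continuous functions on [0,1], monotone decreasing there,
  with \<open>\<integral>_0^1 q(t)^(-2) dt < \<infinity>\<close> (integral of a nonnegative extended-valued function,
  so zeros of q contribute the value \<infinity>).\<close>
definition Qdown :: "(real \<Rightarrow> real) set" where
  "Qdown = {q. continuous_on {0..1} q \<and> antimono_on {0..1} q \<and>
      (\<integral>\<^sup>+ t. indicator {0..1} t * inverse (ennreal ((q t)\<^sup>2)) \<partial>lborel) < \<infinity>}"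

end

theory Submission
  imports Defs
begin

text \<open>
  Write \<open>s = 1 - F\<close> and \<open>h = s / f = 1/\<lambda>\<close>. The moment condition gives the Markov bound
  \<open>t\<^sup>r s(t) \<le> E X\<^sup>r\<close>, so \<open>s\<^sup>\<gamma>\<close> is integrable for \<open>r \<gamma> > 1\<close>; all weights are \<open>q(u) = (1 - u)\<^sup>\<gamma>\<close>.

  (a) If \<open>h' \<rightarrow> c\<close> then \<open>h\<close> grows like \<open>c t\<close>. For \<open>c < 0\<close> it would become negative, and for
  \<open>c > 1/r\<close> the function \<open>s(t) (t - Y)\<^sup>p\<close> with \<open>1/p\<close> just below \<open>c\<close> is increasing, so \<open>s\<close>
  decays no faster than \<open>t\<^sup>-\<^sup>p\<close> with \<open>p < r\<close>, contradicting the Markov bound. Since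
  \<open>(h s\<^sup>\<gamma>)' = s\<^sup>\<gamma> (h' - \<gamma>)\<close>, L'Hospital's rule gives \<open>\<integral>\<^sub>x\<^sup>\<infinity> s\<^sup>\<gamma> \<sim> h s\<^sup>\<gamma> / (\<gamma> - c)\<close>; with \<open>\<gamma> = 1\<close>
  this is \<open>e \<sim> h / (1 - c)\<close>, and one more application to \<open>\<integral>\<^sub>x\<^sup>\<infinity> (t - x)\<^sup>2 f(t) dt\<close>, whose
  derivative is \<open>-2 \<integral>\<^sub>x\<^sup>\<infinity> s\<close>, yields \<open>\<sigma>\<^sup>2 / e\<^sup>2 \<rightarrow> 1 / (1 - 2c)\<close>.

  (b) The hypothesis says \<open>s\<^sup>1\<^sup>+\<^sup>\<gamma> \<le> C f\<close> eventually. On an interval where \<open>s\<close> drops from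
  \<open>u\<close> to \<open>u/2\<close> it loses mass at rate at least \<open>(u/2)\<^sup>1\<^sup>+\<^sup>\<gamma>/C\<close>, so the interval is shorter than
  \<open>2\<^sup>1\<^sup>+\<^sup>\<gamma> C u\<^sup>-\<^sup>\<gamma>\<close>; summing over the dyadic levels gives \<open>\<integral>\<^sub>x\<^sup>\<infinity> s \<le> B s(x)\<^sup>1\<^sup>-\<^sup>\<gamma>\<close>,
  i.e. \<open>e q(F) \<le> B\<close>.
\<close>

lemma lhopital_at_top_0:
  fixes f g f' g' :: "real \<Rightarrow> real"
  assumes f0: "(f \<longlongrightarrow> 0) at_top" and g0: "(g \<longlongrightarrow> 0) at_top"
    and gnz: "eventually (\<lambda>x. g x \<noteq> 0) at_top"
    and g'nz: "eventually (\<lambda>x. g' x \<noteq> 0) at_top"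
    and df: "eventually (\<lambda>x. DERIV f x :> f' x) at_top"
    and dg: "eventually (\<lambda>x. DERIV g x :> g' x) at_top"
    and lim: "((\<lambda>x. f' x / g' x) \<longlongrightarrow> L) at_top"
  shows "((\<lambda>x. f x / g x) \<longlongrightarrow> L) at_top"
proof -
  have pos: "eventually (\<lambda>x. x > (0::real)) (at_right 0)"
    by (simp add: eventually_at_right_less)
  have "((\<lambda>x. f (inverse x) / g (inverse x)) \<longlongrightarrow> L) (at_right 0)"
  proof (rule lhopital_right_0[where f'="\<lambda>x. f' (inverse x) * (- inverse (x^2))"
        and g'="\<lambda>x. g' (inverse x) * (- inverse (x^2))"])
    show "((\<lambda>x. f (inverse x)) \<longlongrightarrow> 0) (at_right 0)"
      using f0 by (simp add: filterlim_at_top_to_right)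
    show "((\<lambda>x. g (inverse x)) \<longlongrightarrow> 0) (at_right 0)"
      using g0 by (simp add: filterlim_at_top_to_right)
    show "eventually (\<lambda>x. g (inverse x) \<noteq> 0) (at_right 0)"
      using gnz by (simp add: eventually_at_top_to_right)
    show "eventually (\<lambda>x. g' (inverse x) * (- inverse (x^2)) \<noteq> 0) (at_right 0)"
      using g'nz pos unfolding eventually_at_top_to_right
      by eventually_elim auto
    show "eventually (\<lambda>x. DERIV (\<lambda>x. f (inverse x)) x :> f' (inverse x) * (- inverse (x^2)))
        (at_right 0)"
      using df pos unfolding eventually_at_top_to_right
      by eventually_elim (use DERIV_chain2[OF _ DERIV_inverse, where f=f]
          in \<open>auto simp: power2_eq_square inverse_mult_distrib\<close>)
    show "eventually (\<lambda>x. DERIV (\<lambda>x. g (inverse x)) x :> g' (inverse x) * (- inverse (x^2)))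
        (at_right 0)"
      using dg pos unfolding eventually_at_top_to_right
      by eventually_elim (use DERIV_chain2[OF _ DERIV_inverse, where f=g]
          in \<open>auto simp: power2_eq_square inverse_mult_distrib\<close>)
    have "((\<lambda>x. f' (inverse x) / g' (inverse x)) \<longlongrightarrow> L) (at_right 0)"
      using lim by (simp add: filterlim_at_top_to_right)
    moreover have "eventually (\<lambda>x. f' (inverse x) / g' (inverse x) =
        f' (inverse x) * (- inverse (x^2)) / (g' (inverse x) * (- inverse (x^2)))) (at_right 0)"
      using pos by eventually_elim auto
    ultimately show "((\<lambda>x. f' (inverse x) * (- inverse (x^2)) / (g' (inverse x) * (- inverse (x^2))))
        \<longlongrightarrow> L) (at_right 0)"
      by (rule Lim_transform_eventually)
  qed
  then show ?thesis by (simp add: filterlim_at_top_to_right)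
qed

lemma eq_0_if_has_real_derivative_0_tendsto_0:
  fixes D :: "real \<Rightarrow> real"
  assumes deriv: "\<And>y. y > b \<Longrightarrow> (D has_real_derivative 0) (at y)"
    and lim: "(D \<longlongrightarrow> 0) at_top" and x: "x > b"
  shows "D x = 0"
proof -
  have const: "D y = D x" if "x < y" for y
  proof (rule DERIV_isconst2[OF that])
    show "continuous_on {x..y} D"
      using x that by (intro continuous_at_imp_continuous_on ballI DERIV_isCont[OF deriv]) auto
  qed (use deriv x that in auto)
  have "eventually (\<lambda>y. D y = D x) at_top"
    using eventually_gt_at_top[of x] by eventually_elim (rule const)
  then have "((\<lambda>y::real. D x) \<longlongrightarrow> 0) at_top"
    using Lim_transform_eventually[OF lim] by simp
  then show ?thesis
    using tendsto_unique[OF trivial_limit_at_top_linorder tendsto_const] by blast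
qed

lemma integral_interval_pos:
  fixes h :: "real \<Rightarrow> real"
  assumes int: "h integrable_on {x..y}" and xy: "x < y" and pos: "\<And>t. t \<in> {x..y} \<Longrightarrow> h t > 0"
  shows "integral {x..y} h > 0"
proof -
  have af: "h absolutely_integrable_on {x..y}"
    using int pos by (intro nonnegative_absolutely_integrable_1) (auto simp: less_imp_le)
  have "integral {x..y} h \<noteq> 0"
  proof
    assume "integral {x..y} h = 0"
    then have "(LINT t|lebesgue. indicator {x..y} t *\<^sub>R h t) = 0"
      using set_lebesgue_integral_eq_integral(2)[OF af] by (simp add: set_lebesgue_integral_def)
    then have "AE t in lebesgue. indicator {x..y} t *\<^sub>R h t = 0"
      using af pos
      by (subst (asm) integral_nonneg_eq_0_iff_AE)
         (auto simp: set_integrable_def indicator_def less_imp_le)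
    then have "AE t in lebesgue. t \<notin> {x..y}"
      by eventually_elim (use pos in \<open>fastforce simp: indicator_def split: if_splits\<close>)
    then have "{x..y} \<in> null_sets lebesgue"
      by (subst AE_iff_null_sets) auto
    then have "emeasure lebesgue {x..y} = 0" by auto
    with xy show False by simp
  qed
  moreover have "integral {x..y} h \<ge> 0"
    using int pos by (intro integral_nonneg) (auto simp: less_imp_le)
  ultimately show ?thesis by simp
qed

lemma nonneg_integrable_on_Ici_if_bounded:
  fixes h :: "real \<Rightarrow> real"
  assumes int: "\<And>y. h integrable_on {a..y}" and nn: "\<And>t. a \<le> t \<Longrightarrow> 0 \<le> h t"
    and bd: "\<And>y. integral {a..y} h \<le> B"
  shows "h integrable_on {a..}" "((\<lambda>y. integral {a..y} h) \<longlongrightarrow> integral {a..} h) at_top"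
proof -
  have mono: "integral {a..y} h \<le> integral {a..z} h" if "y \<le> z" for y z
    using that int nn by (intro integral_subset_le) auto
  have bdd: "bdd_above (range (\<lambda>y. integral {a..y} h))"
    using bd by (auto intro!: bdd_aboveI2)
  define l where "l = (SUP y. integral {a..y} h)"
  have "((\<lambda>y. integral {a..y} h) \<longlongrightarrow> l) at_top"
  proof (rule increasing_tendsto)
    show "eventually (\<lambda>y. integral {a..y} h \<le> l) at_top"
      by (intro always_eventually allI) (auto simp: l_def intro!: cSUP_upper bdd)
    fix x assume "x < l"
    then obtain y where y: "x < integral {a..y} h"
      unfolding l_def using bdd by (subst (asm) less_cSUP_iff) auto
    show "eventually (\<lambda>z. x < integral {a..z} h) at_top"
      using eventually_ge_at_top[of y] by eventually_elim (use mono y in fastforce)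
  qed
  moreover from has_integral_to_inf[OF int this nn] have "(h has_integral l) {a..}" .
  ultimately show "h integrable_on {a..}" "((\<lambda>y. integral {a..y} h) \<longlongrightarrow> integral {a..} h) at_top"
    by (auto simp: integrable_on_def integral_unique)
qed

lemma nonneg_integrable_on_Ici_tail:
  fixes h :: "real \<Rightarrow> real"
  assumes int: "h integrable_on {a..}" and nn: "\<And>t. a \<le> t \<Longrightarrow> 0 \<le> h t" and x: "a \<le> x"
  shows "h integrable_on {x..}" "integral {x..} h = integral {a..} h - integral {a..x} h"
proof -
  have int_Icc: "h integrable_on {a..y}" for y
    by (rule integrable_on_subinterval[OF int]) auto
  have combine: "integral {x..y} h = integral {a..y} h - integral {a..x} h" if "x \<le> y" for y
    using Henstock_Kurzweil_Integration.integral_combine[of a x y h] x that int_Icc by simp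
  have bd: "integral {a..y} h \<le> integral {a..} h" for y
    using int int_Icc nn by (intro integral_subset_le) auto
  have bd_x: "integral {x..y} h \<le> integral {a..} h - integral {a..x} h" for y
    by (cases "x \<le> y") (use combine bd in auto)
  have int_x: "h integrable_on {x..y}" for y
    by (rule integrable_on_subinterval[OF int]) (use x in auto)
  have nn_x: "0 \<le> h t" if "x \<le> t" for t
    using nn x that by simp
  note tail = nonneg_integrable_on_Ici_if_bounded[OF int_x nn_x bd_x]
  show "h integrable_on {x..}"
    by (rule tail(1))
  have "((\<lambda>y. integral {a..y} h - integral {a..x} h) \<longlongrightarrow> integral {a..} h - integral {a..x} h) at_top"
    by (intro tendsto_diff tendsto_const nonneg_integrable_on_Ici_if_bounded(2)[OF int_Icc nn bd])
  then have "((\<lambda>y. integral {x..y} h) \<longlongrightarrow> integral {a..} h - integral {a..x} h) at_top"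
    by (rule Lim_transform_eventually)
       (use eventually_ge_at_top[of x] in \<open>eventually_elim, simp add: combine\<close>)
  with tail(2) show "integral {x..} h = integral {a..} h - integral {a..x} h"
    by (rule tendsto_unique[OF trivial_limit_at_top_linorder])
qed

lemma nonneg_integral_Ici_tendsto_0:
  fixes h :: "real \<Rightarrow> real"
  assumes int: "h integrable_on {a..}" and nn: "\<And>t. a \<le> t \<Longrightarrow> 0 \<le> h t"
  shows "((\<lambda>x. integral {x..} h) \<longlongrightarrow> 0) at_top"
proof -
  have int_Icc: "h integrable_on {a..y}" for y
    by (rule integrable_on_subinterval[OF int]) auto
  have bd: "integral {a..y} h \<le> integral {a..} h" for y
    using int int_Icc nn by (intro integral_subset_le) auto
  have "((\<lambda>x. integral {a..} h - integral {a..x} h) \<longlongrightarrow> integral {a..} h - integral {a..} h) at_top"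
    by (intro tendsto_diff tendsto_const nonneg_integrable_on_Ici_if_bounded(2)[OF int_Icc nn bd])
  then have "((\<lambda>x. integral {a..} h - integral {a..x} h) \<longlongrightarrow> 0) at_top"
    by simp
  moreover have "eventually (\<lambda>x. integral {a..} h - integral {a..x} h = integral {x..} h) at_top"
    using eventually_ge_at_top[of a]
    by eventually_elim (rule nonneg_integrable_on_Ici_tail(2)[OF int nn, symmetric])
  ultimately show ?thesis
    by (rule Lim_transform_eventually)
qed

lemma nonneg_integral_Ici_has_real_derivative:
  fixes h :: "real \<Rightarrow> real"
  assumes int: "h integrable_on {a..}" and nn: "\<And>t. a \<le> t \<Longrightarrow> 0 \<le> h t"
    and x: "a < x" and cont: "isCont h x"
  shows "((\<lambda>y. integral {y..} h) has_real_derivative - h x) (at x)"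
proof -
  have "((\<lambda>u. integral {a..u} h) has_vector_derivative h x) (at x within {a..x+1} - {})"
    using x cont integrable_on_subinterval[OF int, of a "x + 1"]
    by (intro integral_has_vector_derivative_continuous_at)
       (auto intro: continuous_at_imp_continuous_within)
  then have "((\<lambda>u. integral {a..u} h) has_real_derivative h x) (at x)"
    using at_within_interior[of x "{a..x+1}"] x
    by (simp add: has_real_derivative_iff_has_vector_derivative)
  then have "((\<lambda>u. integral {a..} h - integral {a..u} h) has_real_derivative - h x) (at x)"
    by (auto intro!: derivative_eq_intros)
  then show ?thesis
  proof (rule has_field_derivative_transform_within_open[where S="{a<..}"])
    show "integral {a..} h - integral {a..y} h = integral {y..} h" if "y \<in> {a<..}" for y
      using that by (intro nonneg_integrable_on_Ici_tail(2)[OF int nn, symmetric]) auto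
  qed (use x in auto)
qed

lemma integrable_on_Ici_if_powr_majorant:
  fixes \<phi> :: "real \<Rightarrow> real"
  assumes cont: "continuous_on {a..} \<phi>" and nn: "\<And>t. a \<le> t \<Longrightarrow> 0 \<le> \<phi> t"
    and b: "0 < b" and e: "e < -1" and le: "\<And>t. b \<le> t \<Longrightarrow> \<phi> t \<le> K * t powr e"
  shows "\<phi> integrable_on {a..}"
proof -
  define b' where "b' = max a b"
  have b': "0 < b'" "a \<le> b'" "b \<le> b'" using b by (auto simp: b'_def)
  have "(\<lambda>t. t powr e) integrable_on {b'..}"
    using has_integral_powr_to_inf[OF e b'(1)] unfolding integrable_on_def by (rule exI)
  then have maj: "(\<lambda>t. K * t powr e) integrable_on {b'..}"
    by (rule integrable_on_mult_right)
  have meas: "\<phi> \<in> borel_measurable (lebesgue_on {b'..})"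
    using b'
    by (intro continuous_imp_measurable_on_sets_lebesgue continuous_on_subset[OF cont]) auto
  have "\<phi> integrable_on {b'..}"
  proof (rule measurable_bounded_by_integrable_imp_integrable_real[OF meas maj])
    fix t assume "t \<in> {b'..}"
    then have "a \<le> t" "b \<le> t" using b' by auto
    then show "\<bar>\<phi> t\<bar> \<le> K * t powr e" using nn[of t] le[of t] by simp
  qed simp
  moreover have "\<phi> integrable_on {a..b'}"
    by (intro integrable_continuous_interval continuous_on_subset[OF cont]) auto
  moreover have "{a..b'} \<inter> {b'..} = {b'}" "{a..b'} \<union> {b'..} = {a..}"
    using b' by auto
  ultimately show ?thesis
    by (metis integrable_Un negligible_sing)
qed

section \<open>The weights \<open>(1 - u) powr \<gamma>\<close>\<close>

lemma nn_integral_one_minus_powr_finite: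
  fixes a :: real assumes a: "a < 1"
  shows "(\<integral>\<^sup>+ t. ennreal (indicator {0..1} (1 - t) * (1 - t) powr (- a)) \<partial>lborel) < \<infinity>"
proof -
  define k where "k u = indicator {0..1} u * u powr (- a)" for u :: real
  have "(\<lambda>u. u powr (- a)) integrable_on {0..1}"
    using a by (intro integrable_on_powr_from_0) auto
  then have "integrable lebesgue k"
    unfolding k_def using nonnegative_absolutely_integrable_1[of "\<lambda>u. u powr (- a)"]
    by (simp add: set_integrable_def)
  moreover have "k \<in> borel_measurable lborel"
    unfolding k_def by measurable
  ultimately have "integrable lborel k"
    using integrable_completion by blast
  then have "integrable lborel (\<lambda>t. k (1 + (-1) * t))"
    by (subst lborel_integrable_real_affine_iff) auto
  then have "(\<integral>\<^sup>+ t. ennreal (norm (k (1 + (-1) * t))) \<partial>lborel) < \<infinity>"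
    by (simp add: integrable_iff_bounded)
  then show ?thesis
    by (simp add: k_def)
qed

lemma one_minus_powr_in_Qdown:
  fixes g :: real assumes g0: "0 < g" and g1: "g < 1/2"
  shows "(\<lambda>u. (1 - u) powr g) \<in> Qdown"
proof -
  have cont: "continuous_on {0..1} (\<lambda>u::real. (1 - u) powr g)"
    using g0 by (intro continuous_on_powr' continuous_intros) auto
  have anti: "antimono_on {0..1} (\<lambda>u::real. (1 - u) powr g)"
    unfolding monotone_on_def using g0 by (auto intro!: powr_mono2)
  have ae: "AE t in lborel. indicator {0..1} t * inverse (ennreal (((1 - t) powr g)\<^sup>2))
      = ennreal (indicator {0..1} (1 - t) * (1 - t) powr (- (2 * g)))"
    using AE_lborel_singleton[of 1]
  proof eventually_elim
    case (elim t)
    show ?case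
    proof (cases "t \<in> {0..1}")
      case True
      with elim have t: "0 \<le> t" "t < 1" by auto
      then have "((1 - t) powr g)\<^sup>2 = (1 - t) powr (2 * g)" "0 < (1 - t) powr (2 * g)"
        by (simp_all add: power2_eq_square flip: powr_add)
      then show ?thesis
        using True t by (simp add: inverse_ennreal indicator_def powr_minus)
    next
      case False
      then have "1 - t \<notin> {0..1}" by auto
      then show ?thesis using False by simp
    qed
  qed
  have "(\<integral>\<^sup>+ t. indicator {0..1} t * inverse (ennreal (((1 - t) powr g)\<^sup>2)) \<partial>lborel) < \<infinity>"
    using nn_integral_cong_AE[OF ae] nn_integral_one_minus_powr_finite[of "2 * g"] g1 by simp
  then show ?thesis unfolding Qdown_def using cont anti by auto
qed

section \<open>Distributions with a finite moment of order \<open>r\<close>\<close>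

locale density_finite_moment =
  fixes F f :: "real \<Rightarrow> real" and r :: real
  assumes F_neg: "\<And>x. x < 0 \<Longrightarrow> F x = 0"
    and density: "\<And>x. x \<ge> 0 \<Longrightarrow> (f has_integral F x) {0..x}"
    and f_pos: "\<And>x. x \<ge> 0 \<Longrightarrow> f x > 0"
    and F_lim: "(F \<longlongrightarrow> 1) at_top"
    and F_cont: "continuous_on UNIV F"
    and r_gt: "r > 2"
    and moment: "(\<lambda>x. x powr r * f x) integrable_on {0..}"
begin

abbreviation "s \<equiv> survival F"

lemma f_integrable_Icc: "f integrable_on {0..x}"
  by (cases "x \<ge> 0") (use density in \<open>auto simp: integrable_on_def\<close>)

lemma F_eq_integral: "x \<ge> 0 \<Longrightarrow> F x = integral {0..x} f"
  using density integral_unique by metis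

lemma f_nonneg: "t \<ge> 0 \<Longrightarrow> f t \<ge> 0"
  using f_pos[of t] by simp

lemma F_nonneg: "F x \<ge> 0"
  by (cases "x \<ge> 0")
     (use F_eq_integral integral_nonneg[OF f_integrable_Icc] f_nonneg F_neg in auto)

lemma F_diff: "0 \<le> x \<Longrightarrow> x \<le> y \<Longrightarrow> F y - F x = integral {x..y} f"
  using Henstock_Kurzweil_Integration.integral_combine[of 0 x y f] f_integrable_Icc[of y]
  by (simp add: F_eq_integral)

lemma F_strict_mono: "0 \<le> x \<Longrightarrow> x < y \<Longrightarrow> F x < F y"
  using F_diff[of x y] f_pos
    integral_interval_pos[OF integrable_on_subinterval[OF f_integrable_Icc[of y]]] by force

lemma F_mono: "x \<le> y \<Longrightarrow> F x \<le> F y"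
  using F_strict_mono[of x y] F_neg[of x] F_nonneg[of y] by (cases "x < 0"; cases "x = y") auto

lemma F_less_1: "F x < 1"
proof -
  have "F x < F (max x 0 + 1)"
    using F_mono[of x "max x 0"] F_strict_mono[of "max x 0" "max x 0 + 1"] by simp
  also have "\<dots> \<le> 1"
  proof (rule tendsto_lowerbound[OF F_lim])
    show "eventually (\<lambda>y. F (max x 0 + 1) \<le> F y) at_top"
      using eventually_ge_at_top[of "max x 0 + 1"] by eventually_elim (rule F_mono)
  qed simp
  finally show ?thesis .
qed

lemma s_pos: "s x > 0"
  using F_less_1 by (simp add: survival_def)

lemma s_le_1: "s x \<le> 1"
  using F_nonneg by (simp add: survival_def)

lemma s_antimono: "x \<le> y \<Longrightarrow> s y \<le> s x"
  using F_mono by (simp add: survival_def)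

lemma s_continuous_on: "continuous_on A s"
  unfolding survival_def by (intro continuous_intros continuous_on_subset[OF F_cont]) auto

lemma s_tendsto_0: "(s \<longlongrightarrow> 0) at_top"
  unfolding survival_def using tendsto_diff[OF tendsto_const[of 1] F_lim] by simp

lemma f_integrable: "f integrable_on {0..}" and integral_f: "integral {0..} f = 1"
proof -
  have bd: "integral {0..y} f \<le> 1" for y
    by (cases "y \<ge> 0") (use F_eq_integral[of y] F_less_1[of y] in auto)
  note tail = nonneg_integrable_on_Ici_if_bounded[OF f_integrable_Icc f_nonneg bd]
  show "f integrable_on {0..}"
    using tail(1) by simp
  have "((\<lambda>y. integral {0..y} f) \<longlongrightarrow> 1) at_top"
    using F_lim eventually_ge_at_top[of 0]
    by (rule Lim_transform_eventually[OF _ eventually_mono]) (rule F_eq_integral)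
  with tail(2) show "integral {0..} f = 1"
    by (rule tendsto_unique[OF trivial_limit_at_top_linorder])
qed

lemma s_eq_integral: "x \<ge> 0 \<Longrightarrow> s x = integral {x..} f"
  using nonneg_integrable_on_Ici_tail(2)[OF f_integrable f_nonneg, of x]
  by (simp add: F_eq_integral survival_def integral_f)

definition moment_r :: real where
  "moment_r = integral {0..} (\<lambda>t. t powr r * f t)"

lemma powr_s_le_moment_r: assumes t: "t \<ge> 0" shows "t powr r * s t \<le> moment_r"
proof -
  have nn: "0 \<le> u powr r * f u" if "0 \<le> u" for u
    using f_nonneg that by simp
  have "t powr r * s t = integral {t..} (\<lambda>u. t powr r * f u)"
    using s_eq_integral[OF t] by simp
  also have "\<dots> \<le> integral {t..} (\<lambda>u. u powr r * f u)"
  proof (rule integral_le)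
    show "(\<lambda>u. t powr r * f u) integrable_on {t..}"
      using nonneg_integrable_on_Ici_tail(1)[OF f_integrable f_nonneg t]
      by (rule integrable_on_mult_right)
    show "(\<lambda>u. u powr r * f u) integrable_on {t..}"
      by (rule nonneg_integrable_on_Ici_tail(1)[OF moment nn t])
    show "t powr r * f u \<le> u powr r * f u" if "u \<in> {t..}" for u
      using that t f_nonneg[of u] r_gt by (intro mult_right_mono powr_mono2) auto
  qed
  also have "\<dots> \<le> moment_r"
    unfolding moment_r_def
    using moment nn t nonneg_integrable_on_Ici_tail(1)[OF moment nn t]
    by (intro integral_subset_le) auto
  finally show ?thesis .
qed

lemma power_times_f_integrable:
  assumes k: "real k \<le> r" shows "(\<lambda>t. t ^ k * f t) integrable_on {0..}"
proof (rule measurable_bounded_by_integrable_imp_integrable_real)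
  show "(\<lambda>t. t ^ k * f t) \<in> borel_measurable (lebesgue_on {0..})"
    by (intro borel_measurable_times continuous_imp_measurable_on_sets_lebesgue
        integrable_imp_measurable f_integrable continuous_intros) auto
  show "(\<lambda>t. f t + t powr r * f t) integrable_on {0..}"
    by (intro integrable_add f_integrable moment)
  show "\<bar>t ^ k * f t\<bar> \<le> f t + t powr r * f t" if "t \<in> {0..}" for t
  proof -
    have t: "0 \<le> t" using that by simp
    have "t ^ k \<le> 1 + t powr r"
    proof (cases "t \<le> 1")
      case True
      then show ?thesis using t power_le_one[of t k] powr_ge_zero[of t r] by linarith
    next
      case False
      then have "t ^ k \<le> t powr r"
        using k powr_mono[of "real k" r t] by (simp add: powr_realpow)
      then show ?thesis by simp
    qed
    then have "t ^ k * f t \<le> (1 + t powr r) * f t"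
      using f_nonneg[OF t] by (rule mult_right_mono)
    then show ?thesis
      using t f_nonneg[OF t] by (simp add: distrib_right)
  qed
qed simp

lemma s_powr_integrable:
  assumes g: "0 < g" and rg: "r * g > 1"
  shows "(\<lambda>t. s t powr g) integrable_on {0..}"
proof (rule integrable_on_Ici_if_powr_majorant)
  show "continuous_on {0..} (\<lambda>t. s t powr g)"
    using s_pos by (intro continuous_intros s_continuous_on) (metis less_irrefl)
  show "s t powr g \<le> moment_r powr g * t powr (- (r * g))" if t: "1 \<le> t" for t
  proof -
    have "s t \<le> moment_r * t powr (- r)"
      using powr_s_le_moment_r[of t] t by (simp add: powr_minus field_simps)
    then have "s t powr g \<le> (moment_r * t powr (- r)) powr g"
      using s_pos[of t] g by (intro powr_mono2) auto
    also have "\<dots> = moment_r powr g * t powr (- (r * g))"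
      using t powr_s_le_moment_r[of t] s_pos[of t]
      by (subst powr_mult) (auto simp: powr_powr zero_le_mult_iff)
    finally show ?thesis .
  qed
qed (use rg in auto)

lemma s_integrable: "s integrable_on {0..}"
  using s_powr_integrable[of 1] s_pos r_gt by (simp add: less_imp_le)

lemma powr_times_s_tendsto_0:
  assumes "0 \<le> k" "k < r" shows "((\<lambda>t. t powr k * s t) \<longlongrightarrow> 0) at_top"
proof (rule tendsto_sandwich[where f="\<lambda>_. 0" and h="\<lambda>t. moment_r * t powr (k - r)"])
  show "eventually (\<lambda>t. 0 \<le> t powr k * s t) at_top"
    using s_pos by (intro always_eventually) (simp add: less_imp_le)
  show "eventually (\<lambda>t. t powr k * s t \<le> moment_r * t powr (k - r)) at_top"
    using eventually_gt_at_top[of 0]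
  proof eventually_elim
    case (elim t)
    then have "s t \<le> moment_r / t powr r"
      using powr_s_le_moment_r[of t] by (simp add: pos_le_divide_eq mult.commute)
    then have "t powr k * s t \<le> t powr k * (moment_r / t powr r)"
      by (intro mult_left_mono) auto
    with elim show ?case by (simp add: powr_diff ac_simps)
  qed
  have "((\<lambda>t. t powr (k - r)) \<longlongrightarrow> 0) at_top"
    using assms by (intro tendsto_neg_powr filterlim_ident) auto
  then show "((\<lambda>t. moment_r * t powr (k - r)) \<longlongrightarrow> 0) at_top"
    by (rule tendsto_mult_right_zero)
qed auto

lemma power_times_s_tendsto_0:
  assumes "real k < r" shows "((\<lambda>t. t ^ k * s t) \<longlongrightarrow> 0) at_top"
proof (rule Lim_transform_eventually)
  show "((\<lambda>t. t powr k * s t) \<longlongrightarrow> 0) at_top"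
    using assms by (intro powr_times_s_tendsto_0) auto
  show "eventually (\<lambda>t. t powr k * s t = t ^ k * s t) at_top"
    using eventually_gt_at_top[of 0] by eventually_elim (simp add: powr_realpow)
qed

lemma survival_times_powr_not_bounded_below:
  assumes p: "0 < p" "p < r" and K: "0 < K"
  shows "\<not> (\<forall>t\<ge>T. K \<le> s t * (t - Y) powr p)"
proof
  assume lower: "\<forall>t\<ge>T. K \<le> s t * (t - Y) powr p"
  define k where "k = (p + r) / 2"
  have k: "p < k" "k < r" "0 \<le> k" using p by (auto simp: k_def)
  have "eventually (\<lambda>t. K / 2 powr p \<le> t powr k * s t) at_top"
    using eventually_ge_at_top[of "max T (max 1 \<bar>Y\<bar>)"]
  proof eventually_elim
    case (elim t)
    then have t: "T \<le> t" "1 \<le> t" "\<bar>Y\<bar> \<le> t" by auto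
    have "(t - Y) powr p \<le> (2 * t) powr p"
      using t p by (intro powr_mono2) auto
    also have "\<dots> \<le> 2 powr p * t powr k"
      using t k by (auto simp: powr_mult intro!: mult_left_mono powr_mono)
    finally have "K \<le> s t * (2 powr p * t powr k)"
      using lower t(1) s_pos[of t] by (meson mult_left_mono order_trans less_imp_le)
    then show ?case by (simp add: divide_le_eq algebra_simps)
  qed
  moreover have "eventually (\<lambda>t. t powr k * s t < K / 2 powr p) at_top"
    using order_tendstoD(2)[OF powr_times_s_tendsto_0[OF k(3) k(2)]] K by simp
  ultimately have "eventually (\<lambda>t::real. False) at_top"
    by eventually_elim simp
  then show False by simp
qed

section \<open>Density bounded below by a power of the survival function\<close>

lemma integral_s_le_if_halving:
  assumes x: "0 \<le> x" "x \<le> y" and half: "s x / 2 \<le> s y" and g: "0 < g" and C: "0 < C"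
    and bound: "\<And>t. x \<le> t \<Longrightarrow> t \<le> y \<Longrightarrow> s t powr (1 + g) \<le> C * f t"
  shows "integral {x..y} s \<le> C * 2 powr (1 + g) * s x powr (1 - g)"
proof -
  define u where "u = s x"
  have u: "u > 0" using s_pos by (simp add: u_def)
  have "(y - x) * ((u / 2) powr (1 + g) / C) = integral {x..y} (\<lambda>t. (u / 2) powr (1 + g) / C)"
    using x by simp
  also have "\<dots> \<le> integral {x..y} f"
  proof (rule integral_le)
    show "f integrable_on {x..y}"
      by (rule integrable_on_subinterval[OF f_integrable_Icc[of y]]) (use x in auto)
    fix t assume t: "t \<in> {x..y}"
    have "(u / 2) powr (1 + g) \<le> s t powr (1 + g)"
      using t half s_antimono[of t y] u g by (intro powr_mono2) (auto simp: u_def)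
    also have "\<dots> \<le> C * f t" using bound t by auto
    finally show "(u / 2) powr (1 + g) / C \<le> f t"
      using C by (simp add: divide_le_eq mult.commute)
  qed auto
  also have "\<dots> = u - s y"
    using F_diff[OF x] by (simp add: survival_def u_def)
  also have "\<dots> \<le> u" using s_pos[of y] by simp
  finally have "(y - x) * ((u / 2) powr (1 + g) / C) \<le> u" .
  moreover have "0 < (u / 2) powr (1 + g) / C" using u C by simp
  ultimately have "y - x \<le> u / ((u / 2) powr (1 + g) / C)"
    by (simp only: pos_le_divide_eq)
  have "integral {x..y} s \<le> integral {x..y} (\<lambda>t. u)"
    by (rule integral_le)
       (auto simp: u_def s_antimono intro: integrable_continuous_interval s_continuous_on)
  also have "\<dots> = (y - x) * u" using x by simp
  also have "\<dots> \<le> u / ((u / 2) powr (1 + g) / C) * u"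
    using \<open>y - x \<le> _\<close> u by (intro mult_right_mono) auto
  also have "\<dots> = C * 2 powr (1 + g) * u powr (1 - g)"
    using u C by (simp add: powr_divide powr_add powr_diff field_simps)
  finally show ?thesis by (simp add: u_def)
qed

lemma integral_s_le_powr_dyadic:
  assumes g: "0 < g" "g < 1" and C: "0 < C" and X: "0 \<le> X"
    and bound: "\<And>t. X \<le> t \<Longrightarrow> s t powr (1 + g) \<le> C * f t"
  shows "X \<le> x \<Longrightarrow> x \<le> T \<Longrightarrow> s x / 2 ^ n \<le> s T \<Longrightarrow>
    integral {x..T} s \<le> C * 2 powr (1 + g) / (1 - 2 powr (g - 1)) * s x powr (1 - g)"
proof (induction n arbitrary: x)
  define \<rho> where "\<rho> = 2 powr (g - 1)"
  define A where "A = C * 2 powr (1 + g)"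
  have \<rho>: "0 < \<rho>" "\<rho> < 1" using g by (auto simp: \<rho>_def intro: powr_less_one)
  have step: "integral {x..y} s \<le> A * s x powr (1 - g)"
    if "X \<le> x" "x \<le> y" "s x / 2 \<le> s y" for x y
    using that X g C bound unfolding A_def by (intro integral_s_le_if_halving) auto
  have direct: "integral {x..y} s \<le> A / (1 - \<rho>) * s x powr (1 - g)"
    if "X \<le> x" "x \<le> y" "s x / 2 \<le> s y" for x y
  proof -
    have "A * s x powr (1 - g) \<le> A / (1 - \<rho>) * s x powr (1 - g)"
      using \<rho> C by (intro mult_right_mono) (auto simp: A_def field_simps)
    with step[OF that] show ?thesis by linarith
  qed
  { case 0
    then show ?case
      using direct[of x T] s_pos[of x] unfolding A_def \<rho>_def by simp }
  { case (Suc n)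
    show ?case
    proof (cases "s x / 2 \<le> s T")
      case True
      then show ?thesis using direct[of x T] Suc.prems unfolding A_def \<rho>_def by simp
    next
      case False
      then obtain y where y: "x \<le> y" "y \<le> T" "s y = s x / 2"
        using IVT2'[of s T "s x / 2" x, OF _ _ _ s_continuous_on] Suc.prems s_pos[of x] by force
      have "s y / 2 ^ n = s x / 2 ^ Suc n"
        unfolding y(3) by (simp add: field_simps)
      then have IH: "integral {y..T} s \<le> A / (1 - \<rho>) * s y powr (1 - g)"
        using Suc.IH[of y] Suc.prems y(1,2) unfolding A_def \<rho>_def by simp
      have "integral {x..T} s = integral {x..y} s + integral {y..T} s"
        using Henstock_Kurzweil_Integration.integral_combine[of x y T s] y
          integrable_continuous_interval[OF s_continuous_on] by simp
      also have "\<dots> \<le> A * s x powr (1 - g) + A / (1 - \<rho>) * s y powr (1 - g)"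
        using Suc.prems(1) y by (intro add_mono[OF step IH]) simp_all
      also have "s y powr (1 - g) = \<rho> * s x powr (1 - g)"
        unfolding y(3) \<rho>_def using s_pos[of x] by (simp add: powr_divide powr_diff)
      also have "A * s x powr (1 - g) + A / (1 - \<rho>) * (\<rho> * s x powr (1 - g)) =
          A / (1 - \<rho>) * s x powr (1 - g)"
        using \<rho> by (simp add: field_simps)
      finally show ?thesis unfolding A_def \<rho>_def .
    qed }
qed

lemma integral_Ici_s_le_powr:
  assumes g: "0 < g" "g < 1" and C: "0 < C" and X: "0 \<le> X"
    and bound: "\<And>t. X \<le> t \<Longrightarrow> s t powr (1 + g) \<le> C * f t" and x: "X \<le> x"
  shows "integral {x..} s \<le> C * 2 powr (1 + g) / (1 - 2 powr (g - 1)) * s x powr (1 - g)"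
    (is "_ \<le> ?B")
proof -
  have le_B: "integral {x..T} s \<le> ?B" if "x \<le> T" for T
  proof -
    obtain n where "s x / s T < 2 ^ n"
      using real_arch_pow[of 2 "s x / s T"] by auto
    then have "s x / 2 ^ n \<le> s T"
      using s_pos[of T] by (simp add: field_simps)
    then show ?thesis
      using integral_s_le_powr_dyadic[OF g C X bound x that] by simp
  qed
  have "integral {x..T} s \<le> max ?B 0" for T
    using le_B[of T] by (cases "x \<le> T") (auto simp: le_max_iff_disj)
  then have "((\<lambda>T. integral {x..T} s) \<longlongrightarrow> integral {x..} s) at_top"
    using s_pos
    by (intro nonneg_integrable_on_Ici_if_bounded(2) integrable_continuous_interval s_continuous_on)
       (auto intro: less_imp_le)
  moreover have "eventually (\<lambda>T. integral {x..T} s \<le> ?B) at_top"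
    using eventually_ge_at_top[of x] by eventually_elim (rule le_B)
  ultimately show ?thesis
    by (rule tendsto_upperbound) simp
qed

lemma survival_powr_le_density_beyond:
  assumes ls: "Limsup at_top (\<lambda>x. ereal (s x powr (1 + g) / f x)) < \<infinity>"
  obtains C X where "0 < C" "0 \<le> X" "\<And>t. X \<le> t \<Longrightarrow> s t powr (1 + g) \<le> C * f t"
proof -
  obtain C0 where "Limsup at_top (\<lambda>x. ereal (s x powr (1 + g) / f x)) < ereal C0"
  proof (cases "Limsup at_top (\<lambda>x. ereal (s x powr (1 + g) / f x))")
    case (real L)
    then show ?thesis using that[of "L + 1"] by simp
  qed (use ls that[of 0] in auto)
  then have "eventually (\<lambda>x. s x powr (1 + g) / f x < C0) at_top"
    using Limsup_lessD by fastforce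
  then obtain X0 where X0: "\<And>x. X0 \<le> x \<Longrightarrow> s x powr (1 + g) / f x < C0"
    by (auto simp: eventually_at_top_linorder)
  define X where "X = max X0 0"
  define C where "C = max C0 1"
  have bound: "s t powr (1 + g) \<le> C * f t" if "X \<le> t" for t
  proof -
    have "s t powr (1 + g) / f t \<le> C"
      using X0[of t] that by (simp add: X_def C_def)
    then show ?thesis
      using f_pos[of t] that by (simp add: X_def pos_divide_le_eq mult.commute)
  qed
  show ?thesis
    using that[of C X] bound by (simp add: C_def X_def)
qed

lemma integral_Ici_s_times_powr_le:
  assumes g: "0 < g" "g < 1" and C: "0 < C" and X: "0 \<le> X"
    and bound: "\<And>t. X \<le> t \<Longrightarrow> s t powr (1 + g) \<le> C * f t" and x: "0 \<le> x"
  shows "integral {x..} s * s x powr (g - 1)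
    \<le> max (C * 2 powr (1 + g) / (1 - 2 powr (g - 1))) (integral {0..} s * s X powr (g - 1))"
proof (cases "X \<le> x")
  case True
  have "integral {x..} s * s x powr (g - 1)
      \<le> C * 2 powr (1 + g) / (1 - 2 powr (g - 1)) * s x powr (1 - g) * s x powr (g - 1)"
    using integral_Ici_s_le_powr[OF g C X bound True] by (intro mult_right_mono) auto
  also have "\<dots> = C * 2 powr (1 + g) / (1 - 2 powr (g - 1))"
    using s_pos[of x] by (simp add: mult.assoc flip: powr_add)
  finally show ?thesis by simp
next
  case False
  have "integral {x..} s * s x powr (g - 1) \<le> integral {0..} s * s X powr (g - 1)"
  proof (rule mult_mono)
    show "integral {x..} s \<le> integral {0..} s"
      using nonneg_integrable_on_Ici_tail(1)[OF s_integrable _ x] s_integrable s_pos x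
      by (intro integral_subset_le) (auto simp: less_imp_le)
    show "s x powr (g - 1) \<le> s X powr (g - 1)"
      using False g s_pos[of X] s_antimono[of x X] by (intro powr_mono2') auto
    show "0 \<le> integral {0..} s"
      using s_integrable s_pos by (intro integral_nonneg) (auto simp: less_imp_le)
  qed simp
  then show ?thesis by simp
qed

lemma exists_Qdown_integrable_mrl_bounded:
  assumes g: "1 / r < g" "g < 1 / 2"
    and ls: "Limsup at_top (\<lambda>x. ereal (s x powr (1 + g) / f x)) < \<infinity>"
  shows "\<exists>q\<in>Qdown. (\<lambda>t. q (F t)) integrable_on {0..} \<and> (\<exists>M. \<forall>x\<ge>0. mrl F x * q (F x) \<le> M)"
proof -
  have g0: "0 < g" and rg: "r * g > 1"
    using g r_gt by (auto simp: field_simps intro: le_less_trans[of 0 "1 / r"])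
  define q where "q u = (1 - u) powr g" for u :: real
  have qF: "q (F t) = s t powr g" for t
    by (simp add: q_def survival_def)
  obtain C X where C: "0 < C" and X: "0 \<le> X"
    and bound: "\<And>t. X \<le> t \<Longrightarrow> s t powr (1 + g) \<le> C * f t"
    using survival_powr_le_density_beyond[OF ls] by blast
  have "mrl F x * q (F x) = integral {x..} s * s x powr (g - 1)" for x
    using s_pos[of x] by (simp add: mrl_def qF powr_diff divide_simps)
  then have "\<forall>x\<ge>0. mrl F x * q (F x)
      \<le> max (C * 2 powr (1 + g) / (1 - 2 powr (g - 1))) (integral {0..} s * s X powr (g - 1))"
    using integral_Ici_s_times_powr_le[OF g0 _ C X bound] g by auto
  moreover have "q \<in> Qdown"
    unfolding q_def using g g0 by (intro one_minus_powr_in_Qdown) auto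
  moreover have "(\<lambda>t. q (F t)) integrable_on {0..}"
    unfolding qF using s_powr_integrable[OF g0 rg] .
  ultimately show ?thesis by blast
qed

end

section \<open>Reciprocal hazard with a limiting slope\<close>

locale hazard_slope_limit = density_finite_moment +
  fixes x0 c :: real and g' :: "real \<Rightarrow> real"
  assumes h_has_derivative:
      "\<forall>x\<ge>x0. ((\<lambda>y. survival F y / f y) has_real_derivative g' x) (at x within {x0..})"
    and g'_tendsto: "(g' \<longlongrightarrow> c) at_top"
begin

definition h :: "real \<Rightarrow> real" where
  "h y = s y / f y"

definition b0 :: real where
  "b0 = max x0 0"

lemma b0_ge: "0 \<le> b0" "x0 \<le> b0"
  by (auto simp: b0_def)

lemma h_deriv: assumes "b0 < x" shows "(h has_real_derivative g' x) (at x)"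
proof -
  have "(h has_real_derivative g' x) (at x within {x0..})"
    using h_has_derivative assms b0_ge unfolding h_def by auto
  moreover have "at x within {x0..} = at x"
    using assms b0_ge by (intro at_within_interior) auto
  ultimately show ?thesis by simp
qed

lemma h_pos: "0 \<le> x \<Longrightarrow> 0 < h x"
  using s_pos[of x] f_pos[of x] by (simp add: h_def)

lemma h_times_f: "0 \<le> x \<Longrightarrow> h x * f x = s x"
  using f_pos[of x] by (simp add: h_def)

lemma s_isCont: "isCont s x"
  using s_continuous_on[of UNIV] by (simp add: continuous_on_eq_continuous_at)

lemma f_isCont: assumes x: "b0 < x" shows "isCont f x"
proof -
  have cont: "isCont (\<lambda>y. s y / h y) x"
    using DERIV_isCont[OF h_deriv[OF x]] s_isCont h_pos[of x] x b0_ge by (intro isCont_divide) auto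
  have "eventually (\<lambda>y. y \<in> {b0<..}) (nhds x)"
    using x by (intro eventually_nhds_in_open) auto
  then have "eventually (\<lambda>y. s y / h y = f y) (nhds x)"
  proof eventually_elim
    case (elim y)
    then have "0 \<le> y" using b0_ge by simp
    then show ?case using h_times_f[of y] h_pos[of y] by (simp add: field_simps)
  qed
  with cont show ?thesis
    using isCont_cong[of "\<lambda>y. s y / h y" f x] by blast
qed

lemma s_deriv: assumes x: "b0 < x" shows "(s has_real_derivative - f x) (at x)"
proof -
  have "((\<lambda>y. integral {y..} f) has_real_derivative - f x) (at x)"
    using x b0_ge
    by (intro nonneg_integral_Ici_has_real_derivative[OF f_integrable] f_isCont f_nonneg) auto
  then show ?thesis
  proof (rule has_field_derivative_transform_within_open[where S="{0<..}"])
    show "integral {y..} f = s y" if "y \<in> {0<..}" for y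
      using s_eq_integral[of y] that by simp
  qed (use x b0_ge in auto)
qed

lemma s_powr_deriv: assumes x: "b0 < x"
  shows "((\<lambda>y. s y powr g) has_real_derivative g * s x powr (g - 1) * (- f x)) (at x)"
  using DERIV_chain2[OF has_real_derivative_powr[OF s_pos[of x]] s_deriv[OF x]] by simp

lemma h_mvt:
  assumes T: "b0 < T" "T \<le> t"
  obtains z where "T \<le> z" "h t = h T + g' z * (t - T)"
proof (cases "T = t")
  case False
  with T obtain z where "T < z" "z < t" "h t - h T = (t - T) * g' z"
    using MVT2[of T t h g'] h_deriv by force
  then show ?thesis using that[of z] by (simp add: algebra_simps)
qed (use that in auto)

lemma g'_less_beyond:
  assumes "c < L" obtains T where "b0 < T" "\<And>t. T \<le> t \<Longrightarrow> g' t < L"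
proof -
  obtain T0 where "\<And>t. T0 \<le> t \<Longrightarrow> g' t < L"
    using order_tendstoD(2)[OF g'_tendsto assms] by (auto simp: eventually_at_top_linorder)
  then show ?thesis using that[of "max T0 (b0 + 1)"] by auto
qed

lemma g'_greater_beyond:
  assumes "L < c" obtains T where "b0 < T" "\<And>t. T \<le> t \<Longrightarrow> L < g' t"
proof -
  obtain T0 where "\<And>t. T0 \<le> t \<Longrightarrow> L < g' t"
    using order_tendstoD(1)[OF g'_tendsto assms] by (auto simp: eventually_at_top_linorder)
  then show ?thesis using that[of "max T0 (b0 + 1)"] by auto
qed

lemma c_nonneg: "0 \<le> c"
proof (rule ccontr)
  assume "\<not> 0 \<le> c"
  then have c: "c < c / 2" by simp
  obtain T where T: "b0 < T" and le: "\<And>t. T \<le> t \<Longrightarrow> g' t < c / 2"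
    using g'_less_beyond[OF c] by blast
  define t where "t = T - 2 * h T / c"
  have hT: "0 < h T" using T b0_ge by (intro h_pos) auto
  have tT: "T \<le> t" using hT c by (simp add: t_def field_simps)
  obtain z where z: "T \<le> z" "h t = h T + g' z * (t - T)"
    using h_mvt[OF T tT] .
  have "h t \<le> h T + c / 2 * (t - T)"
    unfolding z(2) using le[OF z(1)] tT by (intro add_left_mono mult_right_mono) auto
  also have "\<dots> = 0" using c by (simp add: t_def field_simps)
  finally show False using h_pos[of t] tT T b0_ge by simp
qed

lemma s_times_powr_increasing:
  assumes p: "0 < p" and T: "b0 < T" "Y < T"
    and lin: "\<And>t. T \<le> t \<Longrightarrow> t - Y \<le> p * h t" and t: "T \<le> t"
  shows "s T * (T - Y) powr p \<le> s t * (t - Y) powr p"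
proof (rule DERIV_nonneg_imp_increasing_open[OF t])
  fix u assume u: "T < u" "u < t"
  then have u0: "0 \<le> u" "0 < u - Y" using T b0_ge by auto
  have "((\<lambda>u. s u * (u - Y) powr p) has_real_derivative
      - f u * (u - Y) powr p + s u * (p * (u - Y) powr (p - 1))) (at u)"
    using u u0 T by (auto intro!: derivative_eq_intros s_deriv)
  moreover have "- f u * (u - Y) powr p + s u * (p * (u - Y) powr (p - 1)) =
      (u - Y) powr (p - 1) * f u * (p * h u - (u - Y))"
  proof -
    have "(u - Y) powr p = (u - Y) powr (p - 1) * (u - Y)"
      using u0 by (simp add: powr_diff)
    moreover have "s u = h u * f u"
      using h_times_f[OF u0(1)] by simp
    ultimately show ?thesis by (simp only:) (simp add: algebra_simps)
  qed
  ultimately have "((\<lambda>u. s u * (u - Y) powr p) has_real_derivative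
      (u - Y) powr (p - 1) * f u * (p * h u - (u - Y))) (at u)"
    by simp
  moreover have "0 \<le> (u - Y) powr (p - 1) * f u * (p * h u - (u - Y))"
    using lin[of u] u f_nonneg[OF u0(1)] by simp
  ultimately show "\<exists>y. ((\<lambda>u. s u * (u - Y) powr p) has_real_derivative y) (at u) \<and> 0 \<le> y"
    by blast
next
  show "continuous_on {T..t} (\<lambda>u. s u * (u - Y) powr p)"
    using T b0_ge by (intro continuous_intros continuous_on_subset[OF s_continuous_on]) auto
qed

lemma c_le: "c \<le> 1 / r"
proof (rule ccontr)
  assume "\<not> c \<le> 1 / r"
  then have c: "1 / r < c" by simp
  have r0: "0 < r" using r_gt by simp
  define c' where "c' = (c + 1 / r) / 2"
  have c': "1 / r < c'" "c' < c" "0 < c'"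
    using c r0 by (simp_all add: c'_def field_simps)
  obtain T where T: "b0 < T" and ge: "\<And>t. T \<le> t \<Longrightarrow> c' < g' t"
    using g'_greater_beyond[OF c'(2)] by blast
  define Y where "Y = T - h T / c'"
  have hT: "0 < h T" using T b0_ge by (intro h_pos) auto
  have YT: "Y < T" using hT c' by (simp add: Y_def)
  define p where "p = 1 / c'"
  have p: "0 < p" "p < r" using c' r0 by (auto simp: p_def field_simps)
  have lin: "t - Y \<le> p * h t" if t: "T \<le> t" for t
  proof -
    obtain z where z: "T \<le> z" "h t = h T + g' z * (t - T)"
      using h_mvt[OF T t] .
    have "c' * (t - Y) = h T + c' * (t - T)"
      using c' by (simp add: Y_def field_simps)
    also have "\<dots> \<le> h t"
      unfolding z(2) using ge[OF z(1)] t by (intro add_left_mono mult_right_mono) auto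
    finally show ?thesis using c' by (simp add: p_def field_simps)
  qed
  have "0 < s T * (T - Y) powr p"
    using s_pos[of T] YT by simp
  with s_times_powr_increasing[OF p(1) T YT lin] show False
    using survival_times_powr_not_bounded_below[OF p] by blast
qed

lemma c_less_half: "c < 1 / 2"
  using c_le r_gt by (smt (verit) frac_less2)

definition tail_integral :: "real \<Rightarrow> real \<Rightarrow> real" where
  "tail_integral g x = integral {x..} (\<lambda>t. s t powr g)"

definition tail_moment :: "nat \<Rightarrow> real \<Rightarrow> real" where
  "tail_moment k x = integral {x..} (\<lambda>t. t ^ k * f t)"

definition \<Phi> :: "real \<Rightarrow> real" where
  "\<Phi> x = integral {x..} (\<lambda>t. (t - x)\<^sup>2 * f t)"

lemma tail_integral_1: "tail_integral 1 x = integral {x..} s"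
  using s_pos by (simp add: tail_integral_def less_imp_le)

lemma mrl_eq: "mrl F x = tail_integral 1 x / s x"
  by (simp add: mrl_def tail_integral_1)

lemma s_powr_integrable_Ici:
  assumes "1 / r < g" "0 \<le> x" shows "(\<lambda>t. s t powr g) integrable_on {x..}"
proof (rule nonneg_integrable_on_Ici_tail(1)[OF s_powr_integrable])
  show "0 < g" "1 < r * g"
    using assms r_gt by (auto simp: field_simps intro: le_less_trans[of 0 "1 / r"])
qed (use assms in auto)

lemma tail_integral_pos: assumes "0 \<le> x" shows "0 < tail_integral 1 x"
proof -
  have "0 < integral {x..x+1} s"
    by (rule integral_interval_pos)
       (auto simp: s_pos intro: integrable_continuous_interval s_continuous_on)
  also have "\<dots> \<le> tail_integral 1 x"
    unfolding tail_integral_1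
    using s_powr_integrable_Ici[of 1 x] assms r_gt s_pos
    by (intro integral_subset_le integrable_continuous_interval s_continuous_on)
       (auto simp: less_imp_le)
  finally show ?thesis .
qed

lemma tail_integral_deriv:
  assumes "1 / r < g" "b0 < x"
  shows "(tail_integral g has_real_derivative - (s x powr g)) (at x)"
  unfolding tail_integral_def[abs_def] using assms b0_ge s_pos[of x]
  by (intro continuous_intros s_isCont
      nonneg_integral_Ici_has_real_derivative[OF s_powr_integrable_Ici[OF assms(1) order_refl]]) auto

lemma tail_integral_tendsto_0: "1 / r < g \<Longrightarrow> (tail_integral g \<longlongrightarrow> 0) at_top"
  unfolding tail_integral_def[abs_def]
  by (rule nonneg_integral_Ici_tendsto_0[OF s_powr_integrable_Ici[OF _ order_refl]]) auto

lemma power_times_f_integrable_Ici: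
  assumes "real k \<le> r" "0 \<le> x" shows "(\<lambda>t. t ^ k * f t) integrable_on {x..}"
  using nonneg_integrable_on_Ici_tail(1)[OF power_times_f_integrable[OF assms(1)] _ assms(2)]
  by (simp add: f_nonneg)

lemma tail_moment_deriv:
  assumes "real k \<le> r" "b0 < x"
  shows "(tail_moment k has_real_derivative - (x ^ k * f x)) (at x)"
  unfolding tail_moment_def[abs_def] using assms b0_ge
  by (intro continuous_intros f_isCont nonneg_integral_Ici_has_real_derivative[OF
      power_times_f_integrable_Ici[OF assms(1) order_refl]]) (auto simp: f_nonneg)

lemma tail_moment_tendsto_0: "real k \<le> r \<Longrightarrow> (tail_moment k \<longlongrightarrow> 0) at_top"
  unfolding tail_moment_def[abs_def]
  by (rule nonneg_integral_Ici_tendsto_0[OF power_times_f_integrable_Ici[OF _ order_refl]])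
     (auto simp: f_nonneg)

text \<open>Integration by parts, obtained by differentiating both sides; they agree at infinity.\<close>
lemma tail_integral_1_eq: assumes x: "b0 < x" shows "tail_integral 1 x = tail_moment 1 x - x * s x"
proof -
  define D where "D y = tail_moment 1 y - y * s y - tail_integral 1 y" for y
  have "(D has_real_derivative 0) (at y)" if y: "b0 < y" for y
  proof -
    have "(D has_real_derivative - (y ^ 1 * f y) - (1 * s y + (- f y) * y) - (- (s y powr 1)))
        (at y)"
      unfolding D_def using y r_gt
      by (intro DERIV_diff DERIV_mult DERIV_ident tail_moment_deriv tail_integral_deriv s_deriv)
         auto
    then show ?thesis using s_pos[of y] by (simp add: algebra_simps less_imp_le)
  qed
  moreover have "(D \<longlongrightarrow> 0 - 0 - 0) at_top"
    unfolding D_def[abs_def] using r_gt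
    by (intro tendsto_diff tail_moment_tendsto_0 tail_integral_tendsto_0
        power_times_s_tendsto_0[of 1, simplified]) auto
  ultimately have "D x = 0"
    using eq_0_if_has_real_derivative_0_tendsto_0[of b0 D x] x by simp
  then show ?thesis by (simp add: D_def)
qed

lemma Phi_integrand_eq:
  "(\<lambda>t. (t - x)\<^sup>2 * f t) = (\<lambda>t. t ^ 2 * f t - 2 * x * (t ^ 1 * f t) + x\<^sup>2 * (t ^ 0 * f t))"
  by (auto simp: fun_eq_iff power2_eq_square algebra_simps)

lemma moments_integrable_Ici:
  "k \<le> 2 \<Longrightarrow> 0 \<le> x \<Longrightarrow> (\<lambda>t. t ^ k * f t) integrable_on {x..}"
  using r_gt by (intro power_times_f_integrable_Ici) auto

lemma Phi_integrable: "0 \<le> x \<Longrightarrow> (\<lambda>t. (t - x)\<^sup>2 * f t) integrable_on {x..}"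
  unfolding Phi_integrand_eq
  by (intro integrable_add integrable_diff integrable_on_mult_right moments_integrable_Ici) auto

lemma Phi_eq:
  assumes x: "0 \<le> x" shows "\<Phi> x = tail_moment 2 x - 2 * x * tail_moment 1 x + x\<^sup>2 * s x"
  unfolding \<Phi>_def tail_moment_def Phi_integrand_eq
  using moments_integrable_Ici[OF _ x, of 0] moments_integrable_Ici[OF _ x, of 1]
    moments_integrable_Ici[OF _ x, of 2] s_eq_integral[OF x]
  by (simp add: integral_add integral_diff integrable_diff integrable_on_mult_right)

lemma Phi_deriv: assumes x: "b0 < x" shows "(\<Phi> has_real_derivative - 2 * tail_integral 1 x) (at x)"
proof -
  have "((\<lambda>y. tail_moment 2 y - 2 * y * tail_moment 1 y + y\<^sup>2 * s y) has_real_derivative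
      - (x ^ 2 * f x) - (2 * 1 * tail_moment 1 x + (- (x ^ 1 * f x)) * (2 * x))
        + (2 * x * s x + (- f x) * x\<^sup>2)) (at x)"
    using x r_gt
    by (intro DERIV_add DERIV_diff tail_moment_deriv s_deriv DERIV_mult DERIV_cmult DERIV_ident
        derivative_eq_intros) auto
  moreover have "- (x ^ 2 * f x) - (2 * 1 * tail_moment 1 x + (- (x ^ 1 * f x)) * (2 * x))
      + (2 * x * s x + (- f x) * x\<^sup>2) = - 2 * tail_integral 1 x"
    using tail_integral_1_eq[OF x] by (simp add: algebra_simps power2_eq_square)
  ultimately have "((\<lambda>y. tail_moment 2 y - 2 * y * tail_moment 1 y + y\<^sup>2 * s y)
      has_real_derivative - 2 * tail_integral 1 x) (at x)"
    by simp
  then show ?thesis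
  proof (rule has_field_derivative_transform_within_open[where S="{b0<..}"])
    show "tail_moment 2 y - 2 * y * tail_moment 1 y + y\<^sup>2 * s y = \<Phi> y" if "y \<in> {b0<..}" for y
      using Phi_eq[of y] b0_ge that by simp
  qed (use x in auto)
qed

lemma Phi_tendsto_0: "(\<Phi> \<longlongrightarrow> 0) at_top"
proof (rule tendsto_sandwich[OF _ _ tendsto_const tail_moment_tendsto_0[of 2]])
  have bounds: "0 \<le> \<Phi> x \<and> \<Phi> x \<le> tail_moment 2 x" if x: "0 \<le> x" for x
  proof
    show "0 \<le> \<Phi> x"
      unfolding \<Phi>_def using Phi_integrable[OF x] x f_nonneg by (intro integral_nonneg) auto
    show "\<Phi> x \<le> tail_moment 2 x"
      unfolding \<Phi>_def tail_moment_def
    proof (rule integral_le[OF Phi_integrable[OF x] moments_integrable_Ici[OF _ x]])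
      fix t assume "t \<in> {x..}"
      then show "(t - x)\<^sup>2 * f t \<le> t ^ 2 * f t"
        using x f_nonneg[of t] by (intro mult_right_mono power_mono) auto
    qed simp
  qed
  show "eventually (\<lambda>x. 0 \<le> \<Phi> x) at_top" "eventually (\<lambda>x. \<Phi> x \<le> tail_moment 2 x) at_top"
    using eventually_ge_at_top[of 0] by (eventually_elim, use bounds in blast)+
qed (use r_gt in simp)

lemma h_linear_bound:
  obtains A L where "0 \<le> A" "0 \<le> L" "eventually (\<lambda>t. 0 \<le> h t \<and> h t \<le> A + L * t) at_top"
proof -
  obtain T where T: "b0 < T" and le: "\<And>t. T \<le> t \<Longrightarrow> g' t < c + 1"
    using g'_less_beyond[of "c + 1"] by auto
  have "eventually (\<lambda>t. 0 \<le> h t \<and> h t \<le> h T + (c + 1) * t) at_top"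
    using eventually_ge_at_top[of T]
  proof eventually_elim
    case (elim t)
    obtain z where z: "T \<le> z" "h t = h T + g' z * (t - T)"
      using h_mvt[OF T elim] .
    have "h t \<le> h T + (c + 1) * (t - T)"
      unfolding z(2) using le[OF z(1)] elim by (intro add_left_mono mult_right_mono) auto
    also have "\<dots> \<le> h T + (c + 1) * t"
      using c_nonneg T b0_ge by (simp add: algebra_simps)
    finally show ?case using h_pos[of t] elim T b0_ge by simp
  qed
  then show ?thesis
    using that[of "h T" "c + 1"] h_pos[of T] T b0_ge c_nonneg by simp
qed

lemma times_s_powr_tendsto_0:
  assumes g: "1 / r < g" shows "((\<lambda>t. t * s t powr g) \<longlongrightarrow> 0) at_top"
proof -
  have g0: "0 < g" using g r_gt by (auto intro: le_less_trans[of 0 "1 / r"])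
  have "1 / g < r" using g g0 r_gt by (simp add: field_simps)
  then have "((\<lambda>t. t powr (1 / g) * s t) \<longlongrightarrow> 0) at_top"
    using g0 by (intro powr_times_s_tendsto_0) auto
  then have "((\<lambda>t. (t powr (1 / g) * s t) powr g) \<longlongrightarrow> 0) at_top"
    using g0 s_pos by (intro tendsto_zero_powrI[OF _ tendsto_const]) (auto simp: less_imp_le)
  moreover have "eventually (\<lambda>t. (t powr (1 / g) * s t) powr g = t * s t powr g) at_top"
    using eventually_gt_at_top[of 0]
    by eventually_elim (use g0 s_pos in \<open>simp add: powr_mult powr_powr less_imp_le\<close>)
  ultimately show ?thesis
    by (rule Lim_transform_eventually)
qed

lemma h_times_s_powr_tendsto_0:
  assumes g: "1 / r < g" shows "((\<lambda>t. h t * s t powr g) \<longlongrightarrow> 0) at_top"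
proof -
  have g0: "0 < g" using g r_gt by (auto intro: le_less_trans[of 0 "1 / r"])
  obtain A L where AL: "0 \<le> A" "0 \<le> L" "eventually (\<lambda>t. 0 \<le> h t \<and> h t \<le> A + L * t) at_top"
    by (rule h_linear_bound)
  show ?thesis
  proof (rule tendsto_sandwich[where f="\<lambda>_. 0" and h="\<lambda>t. A * s t powr g + L * (t * s t powr g)"])
    show "eventually (\<lambda>t. 0 \<le> h t * s t powr g) at_top"
      using AL(3) by eventually_elim simp
    show "eventually (\<lambda>t. h t * s t powr g \<le> A * s t powr g + L * (t * s t powr g)) at_top"
      using AL(3)
    proof eventually_elim
      case (elim t)
      then have "h t * s t powr g \<le> (A + L * t) * s t powr g"
        by (intro mult_right_mono) auto
      then show ?case by (simp add: algebra_simps)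
    qed
    have "((\<lambda>t. A * s t powr g + L * (t * s t powr g)) \<longlongrightarrow> A * 0 + L * 0) at_top"
      using s_pos g0
      by (intro tendsto_intros times_s_powr_tendsto_0 g tendsto_zero_powrI[OF s_tendsto_0])
         (auto simp: less_imp_le)
    then show "((\<lambda>t. A * s t powr g + L * (t * s t powr g)) \<longlongrightarrow> 0) at_top" by simp
  qed auto
qed

lemma h_sq_times_s_tendsto_0: "((\<lambda>t. (h t)\<^sup>2 * s t) \<longlongrightarrow> 0) at_top"
proof -
  obtain A L where AL: "0 \<le> A" "0 \<le> L" "eventually (\<lambda>t. 0 \<le> h t \<and> h t \<le> A + L * t) at_top"
    by (rule h_linear_bound)
  define M where "M t = A\<^sup>2 * s t + 2 * A * L * (t ^ 1 * s t) + L\<^sup>2 * (t ^ 2 * s t)" for t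
  show ?thesis
  proof (rule tendsto_sandwich[where f="\<lambda>_. 0" and h=M])
    show "eventually (\<lambda>t. 0 \<le> (h t)\<^sup>2 * s t) at_top"
      using s_pos by (intro always_eventually allI) (simp add: less_imp_le)
    show "eventually (\<lambda>t. (h t)\<^sup>2 * s t \<le> M t) at_top"
      using AL(3)
    proof eventually_elim
      case (elim t)
      then have "(h t)\<^sup>2 * s t \<le> (A + L * t)\<^sup>2 * s t"
        using s_pos[of t] by (intro mult_right_mono power_mono) auto
      then show ?case by (simp add: M_def algebra_simps power2_eq_square)
    qed
    have "(M \<longlongrightarrow> A\<^sup>2 * 0 + 2 * A * L * 0 + L\<^sup>2 * 0) at_top"
      unfolding M_def[abs_def] using r_gt
      by (intro tendsto_intros s_tendsto_0 power_times_s_tendsto_0) auto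
    then show "(M \<longlongrightarrow> 0) at_top" by simp
  qed auto
qed

lemma h_times_s_powr_deriv:
  assumes x: "b0 < x"
  shows "((\<lambda>y. h y * s y powr g) has_real_derivative s x powr g * (g' x - g)) (at x)"
proof -
  have "s x powr (g - 1) * (h x * f x) = s x powr g"
    using h_times_f[of x] x b0_ge s_pos[of x] by (simp add: powr_diff)
  then have "g' x * s x powr g + g * s x powr (g - 1) * - f x * h x = s x powr g * (g' x - g)"
    by (simp add: algebra_simps)
  with DERIV_mult[OF h_deriv[OF x] s_powr_deriv[OF x, where g=g]] show ?thesis
    by simp
qed

lemma tail_integral_ratio_tendsto:
  assumes g: "1 / r < g" and gc: "c < g"
  shows "((\<lambda>x. tail_integral g x / (h x * s x powr g)) \<longlongrightarrow> 1 / (g - c)) at_top"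
proof (rule lhopital_at_top_0[OF tail_integral_tendsto_0[OF g] h_times_s_powr_tendsto_0[OF g]])
  have ev: "eventually (\<lambda>x. b0 < x \<and> g' x < g) at_top"
    using eventually_gt_at_top[of b0] order_tendstoD(2)[OF g'_tendsto gc] by eventually_elim auto
  show "eventually (\<lambda>x. h x * s x powr g \<noteq> 0) at_top"
    using eventually_ge_at_top[of 0]
  proof eventually_elim
    case (elim x)
    show ?case using h_pos[OF elim] s_pos[of x] by simp
  qed
  show "eventually (\<lambda>x. s x powr g * (g' x - g) \<noteq> 0) at_top"
    using ev
  proof eventually_elim
    case (elim x)
    then show ?case using s_pos[of x] by simp
  qed
  show "eventually (\<lambda>x. (tail_integral g has_real_derivative - (s x powr g)) (at x)) at_top"
    using eventually_gt_at_top[of b0] by eventually_elim (rule tail_integral_deriv[OF g])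
  show "eventually (\<lambda>x. ((\<lambda>y. h y * s y powr g) has_real_derivative s x powr g * (g' x - g)) (at x))
      at_top"
    using eventually_gt_at_top[of b0] by eventually_elim (rule h_times_s_powr_deriv)
  have "((\<lambda>x. 1 / (g - g' x)) \<longlongrightarrow> 1 / (g - c)) at_top"
    using gc by (intro tendsto_intros g'_tendsto) auto
  moreover have "eventually (\<lambda>x. 1 / (g - g' x) = - (s x powr g) / (s x powr g * (g' x - g)))
      at_top"
    using ev
  proof eventually_elim
    case (elim x)
    then have "0 < s x powr g" "g' x - g \<noteq> 0" "g - g' x \<noteq> 0" using s_pos[of x] by auto
    then show ?case by (simp add: field_simps)
  qed
  ultimately show "((\<lambda>x. - (s x powr g) / (s x powr g * (g' x - g))) \<longlongrightarrow> 1 / (g - c)) at_top"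
    by (rule Lim_transform_eventually)
qed

lemma mean_residual_ratio_tendsto:
  "((\<lambda>x. tail_integral 1 x / (h x * s x)) \<longlongrightarrow> 1 / (1 - c)) at_top"
  using tail_integral_ratio_tendsto[of 1] c_less_half r_gt s_pos
  by (simp add: less_imp_le)

lemma h_sq_times_s_deriv:
  assumes x: "b0 < x"
  shows "((\<lambda>x. (h x)\<^sup>2 * s x) has_real_derivative h x * s x * (2 * g' x - 1)) (at x)"
proof -
  note DERIV_mult[OF DERIV_power[OF h_deriv[OF x], of 2] s_deriv[OF x]]
  moreover have "f x * (h x)\<^sup>2 = h x * s x"
    using h_times_f[of x] x b0_ge by (simp add: power2_eq_square algebra_simps)
  ultimately show ?thesis by (simp add: algebra_simps)
qed

lemma Phi_ratio_tendsto:
  "((\<lambda>x. \<Phi> x / ((h x)\<^sup>2 * s x)) \<longlongrightarrow> 2 / ((1 - c) * (1 - 2 * c))) at_top"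
proof (rule lhopital_at_top_0[OF Phi_tendsto_0 h_sq_times_s_tendsto_0])
  have ev: "eventually (\<lambda>x. b0 < x \<and> g' x < 1 / 2) at_top"
    using eventually_gt_at_top[of b0] order_tendstoD(2)[OF g'_tendsto c_less_half]
    by eventually_elim auto
  show "eventually (\<lambda>x. (h x)\<^sup>2 * s x \<noteq> 0) at_top"
    using eventually_ge_at_top[of 0]
  proof eventually_elim
    case (elim x)
    show ?case using h_pos[OF elim] s_pos[of x] by simp
  qed
  show "eventually (\<lambda>x. h x * s x * (2 * g' x - 1) \<noteq> 0) at_top"
    using ev
  proof eventually_elim
    case (elim x)
    then show ?case using h_pos[of x] s_pos[of x] b0_ge by simp
  qed
  show "eventually (\<lambda>x. (\<Phi> has_real_derivative - 2 * tail_integral 1 x) (at x)) at_top"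
    using eventually_gt_at_top[of b0] by eventually_elim (rule Phi_deriv)
  show "eventually (\<lambda>x. ((\<lambda>x. (h x)\<^sup>2 * s x) has_real_derivative h x * s x * (2 * g' x - 1)) (at x))
      at_top"
    using eventually_gt_at_top[of b0] by eventually_elim (rule h_sq_times_s_deriv)
  have "((\<lambda>x. 2 * (tail_integral 1 x / (h x * s x)) * (1 / (1 - 2 * g' x))) \<longlongrightarrow>
      2 * (1 / (1 - c)) * (1 / (1 - 2 * c))) at_top"
    using c_less_half by (intro tendsto_intros mean_residual_ratio_tendsto g'_tendsto) auto
  then have "((\<lambda>x. 2 * (tail_integral 1 x / (h x * s x)) * (1 / (1 - 2 * g' x))) \<longlongrightarrow>
      2 / ((1 - c) * (1 - 2 * c))) at_top"
    by simp
  moreover have "eventually (\<lambda>x. 2 * (tail_integral 1 x / (h x * s x)) * (1 / (1 - 2 * g' x)) =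
      - 2 * tail_integral 1 x / (h x * s x * (2 * g' x - 1))) at_top"
    using ev
  proof eventually_elim
    case (elim x)
    then have "h x * s x \<noteq> 0" "1 - 2 * g' x \<noteq> 0"
      using h_pos[of x] s_pos[of x] b0_ge by auto
    moreover have "2 * g' x - 1 = - (1 - 2 * g' x)" by simp
    ultimately show ?case by (simp only:) (simp add: field_simps)
  qed
  ultimately show "((\<lambda>x. - 2 * tail_integral 1 x / (h x * s x * (2 * g' x - 1))) \<longlongrightarrow>
      2 / ((1 - c) * (1 - 2 * c))) at_top"
    by (rule Lim_transform_eventually)
qed

text \<open>With \<open>\<rho> = tail_integral 1 / (h s)\<close> and \<open>\<rho>\<^sub>2 = \<Phi> / (h\<^sup>2 s)\<close>,
  one has \<open>\<sigma>\<^sup>2 / e\<^sup>2 = \<rho>\<^sub>2 / \<rho>\<^sup>2 - 1\<close>.\<close>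
lemma resvar_ratio_tendsto: "((\<lambda>x. resvar F f x / (mrl F x)\<^sup>2) \<longlongrightarrow> 1 / (1 - 2 * c)) at_top"
proof -
  have c: "1 - c \<noteq> 0" "1 - 2 * c \<noteq> 0" using c_less_half by auto
  have "((\<lambda>x. (\<Phi> x / ((h x)\<^sup>2 * s x)) * (inverse (tail_integral 1 x / (h x * s x)))\<^sup>2 - 1) \<longlongrightarrow>
      (2 / ((1 - c) * (1 - 2 * c))) * (inverse (1 / (1 - c)))\<^sup>2 - 1) at_top"
    using c by (intro tendsto_intros Phi_ratio_tendsto mean_residual_ratio_tendsto) auto
  moreover have "(2 / (a * b)) * (inverse (1 / a))\<^sup>2 - 1 = 1 / b"
    if "a \<noteq> 0" "b \<noteq> 0" "2 * a - b = 1" for a b :: real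
    using that by (simp add: field_simps power2_eq_square)
  then have "(2 / ((1 - c) * (1 - 2 * c))) * (inverse (1 / (1 - c)))\<^sup>2 - 1 = 1 / (1 - 2 * c)"
    using c by simp
  moreover have "eventually (\<lambda>x. (\<Phi> x / ((h x)\<^sup>2 * s x)) *
      (inverse (tail_integral 1 x / (h x * s x)))\<^sup>2 - 1 = resvar F f x / (mrl F x)\<^sup>2) at_top"
    using eventually_ge_at_top[of 0]
  proof eventually_elim
    case (elim x)
    have "resvar F f x = \<Phi> x / s x - (tail_integral 1 x / s x)\<^sup>2"
      by (simp add: resvar_def \<Phi>_def mrl_eq)
    then show ?case
      using h_pos[OF elim] s_pos[of x] tail_integral_pos[OF elim]
      by (simp add: mrl_eq field_simps power2_eq_square)
  qed
  ultimately show ?thesis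
    by (simp add: Lim_transform_eventually)
qed

lemma tail_integral_antimono:
  assumes "1 / r < g" "0 \<le> x" "x \<le> y" shows "tail_integral g y \<le> tail_integral g x"
  unfolding tail_integral_def using assms s_powr_integrable_Ici[of g]
  by (intro integral_subset_le) auto

lemma tail_ratio_le_initial:
  assumes g: "1 / r < g" "0 < g" and x: "0 \<le> x" "x \<le> X"
  shows "(tail_integral g x / s x powr g) / (tail_integral 1 x / s x)
    \<le> (tail_integral g 0 / s X powr g) / tail_integral 1 X"
proof (rule frac_le)
  show "0 \<le> tail_integral g 0 / s X powr g"
    unfolding tail_integral_def using s_powr_integrable_Ici[OF g(1) order_refl] s_pos[of X]
    by (intro divide_nonneg_pos integral_nonneg) auto
  show "tail_integral g x / s x powr g \<le> tail_integral g 0 / s X powr g"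
  proof (rule frac_le)
    show "0 \<le> tail_integral g 0"
      unfolding tail_integral_def using s_powr_integrable_Ici[OF g(1) order_refl]
      by (intro integral_nonneg) auto
    show "s X powr g \<le> s x powr g"
      using s_antimono[OF x(2)] s_pos[of X] g by (intro powr_mono2) auto
  qed (use tail_integral_antimono[OF g(1) order_refl x(1)] s_pos[of X] in auto)
  show "0 < tail_integral 1 X"
    using x by (intro tail_integral_pos) simp
  have "tail_integral 1 X \<le> tail_integral 1 x"
    using x r_gt by (intro tail_integral_antimono) auto
  also have "\<dots> \<le> tail_integral 1 x / s x"
    using tail_integral_pos[OF x(1)] s_pos[of x] s_le_1[of x]
    by (simp add: le_divide_eq mult_le_cancel_left1)
  finally show "tail_integral 1 X \<le> tail_integral 1 x / s x" .
qed

lemma tail_ratio_tendsto: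
  assumes g: "1 / r < g" and gc: "c < g"
  shows "((\<lambda>x. (tail_integral g x / s x powr g) / (tail_integral 1 x / s x)) \<longlongrightarrow> (1 - c) / (g - c))
    at_top"
proof -
  have "((\<lambda>x. (tail_integral g x / (h x * s x powr g)) / (tail_integral 1 x / (h x * s x)))
      \<longlongrightarrow> (1 / (g - c)) / (1 / (1 - c))) at_top"
    using c_less_half
    by (intro tendsto_divide tail_integral_ratio_tendsto mean_residual_ratio_tendsto g gc) auto
  moreover have "eventually (\<lambda>x. (tail_integral g x / (h x * s x powr g)) /
      (tail_integral 1 x / (h x * s x)) =
      (tail_integral g x / s x powr g) / (tail_integral 1 x / s x)) at_top"
    using eventually_ge_at_top[of 0]
  proof eventually_elim
    case (elim x)
    then have "0 < h x" "0 < s x" "0 < s x powr g" using h_pos[OF elim] s_pos[of x] by auto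
    then show ?case by (simp add: field_simps)
  qed
  ultimately show ?thesis
    using Lim_transform_eventually by fastforce
qed

lemma exists_Qdown_tail_ratio_bounded:
  "\<exists>q\<in>Qdown. (\<forall>x\<ge>0. (\<lambda>t. q (F t)) integrable_on {x..})
     \<and> (\<exists>M. \<forall>x\<ge>0. (integral {x..} (\<lambda>t. q (F t)) / q (F x)) / mrl F x \<le> M)"
proof -
  define g where "g = (1 / r + 1 / 2) / 2"
  have g: "1 / r < g" "g < 1 / 2" "0 < g"
    using r_gt by (simp_all add: g_def field_simps)
  have gc: "c < g" using c_le g by simp
  define q where "q u = (1 - u) powr g" for u :: real
  have qF: "q (F t) = s t powr g" for t by (simp add: q_def survival_def)
  define R where "R x = (tail_integral g x / s x powr g) / (tail_integral 1 x / s x)" for x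
  have R_eq: "(integral {x..} (\<lambda>t. q (F t)) / q (F x)) / mrl F x = R x" for x
    by (simp add: R_def qF tail_integral_def mrl_eq)
  have "eventually (\<lambda>x. R x < (1 - c) / (g - c) + 1) at_top"
    using tail_ratio_tendsto[OF g(1) gc] unfolding R_def[abs_def] by (rule order_tendstoD) simp
  then obtain X0 where X0: "\<And>x. X0 \<le> x \<Longrightarrow> R x < (1 - c) / (g - c) + 1"
    by (auto simp: eventually_at_top_linorder)
  define X where "X = max X0 0"
  define M where
    "M = max ((1 - c) / (g - c) + 1) ((tail_integral g 0 / s X powr g) / tail_integral 1 X)"
  have "(integral {x..} (\<lambda>t. q (F t)) / q (F x)) / mrl F x \<le> M" if x: "0 \<le> x" for x
  proof (cases "X \<le> x")
    case True
    then show ?thesis using X0[of x] R_eq[of x] by (simp add: X_def M_def)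
  next
    case False
    then show ?thesis
      using tail_ratio_le_initial[OF g(1,3) x, of X] R_eq[of x] by (simp add: R_def M_def)
  qed
  moreover have "q \<in> Qdown"
    unfolding q_def using g by (intro one_minus_powr_in_Qdown) auto
  moreover have "(\<lambda>t. q (F t)) integrable_on {x..}" if "0 \<le> x" for x
    unfolding qF using s_powr_integrable_Ici[OF g(1) that] .
  ultimately show ?thesis
    by (intro bexI[of _ q] conjI exI[of _ M]) auto
qed

end

lemma (in density_finite_moment) hazard_slope_limit_consequences:
  assumes "\<forall>x\<ge>x0. ((\<lambda>y. survival F y / f y) has_real_derivative g' x) (at x within {x0..})"
    and "(g' \<longlongrightarrow> c) at_top"
  shows "0 \<le> c \<and> c \<le> 1 / r
    \<and> (\<exists>q\<in>Qdown. (\<forall>x\<ge>0. (\<lambda>t. q (F t)) integrable_on {x..})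
          \<and> (\<exists>M. \<forall>x\<ge>0. (integral {x..} (\<lambda>t. q (F t)) / q (F x)) / mrl F x \<le> M))
    \<and> ((\<lambda>x. resvar F f x / (mrl F x)\<^sup>2) \<longlongrightarrow> 1 / (1 - 2 * c)) at_top"
proof -
  interpret hazard_slope_limit F f r x0 c g'
    using assms
    by (intro hazard_slope_limit.intro density_finite_moment_axioms hazard_slope_limit_axioms.intro)
  show ?thesis
    by (intro conjI c_nonneg c_le exists_Qdown_tail_ratio_bounded resvar_ratio_tendsto)
qed

theorem proposition3p1:
  fixes F f :: "real \<Rightarrow> real" and r :: real
  assumes F_neg: "\<And>x. x < 0 \<Longrightarrow> F x = 0"
    and density: "\<And>x. x \<ge> 0 \<Longrightarrow> (f has_integral F x) {0..x}"
    and f_pos: "\<And>x. x \<ge> 0 \<Longrightarrow> f x > 0"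
    and F_lim: "(F \<longlongrightarrow> 1) at_top"
    and F_cont: "continuous_on UNIV F"
    and r_gt: "r > 2"
    and moment: "(\<lambda>x. x powr r * f x) integrable_on {0..}"
  shows
    "(\<forall>x0 c g'. (\<forall>x\<ge>x0. ((\<lambda>y. survival F y / f y) has_real_derivative g' x) (at x within {x0..}))
        \<and> (g' \<longlongrightarrow> c) at_top \<longrightarrow>
        0 \<le> c \<and> c \<le> 1 / r
        \<and> (\<exists>q\<in>Qdown. (\<forall>x\<ge>0. (\<lambda>t. q (F t)) integrable_on {x..})
              \<and> (\<exists>M. \<forall>x\<ge>0. (integral {x..} (\<lambda>t. q (F t)) / q (F x)) / mrl F x \<le> M))
        \<and> ((\<lambda>x. resvar F f x / (mrl F x)\<^sup>2) \<longlongrightarrow> 1 / (1 - 2 * c)) at_top)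
   \<and> (\<forall>\<gamma>. 1 / r < \<gamma> \<and> \<gamma> < 1 / 2
        \<and> Limsup at_top (\<lambda>x::real. ereal (survival F x powr (1 + \<gamma>) / f x)) < \<infinity> \<longrightarrow>
        (\<exists>q\<in>Qdown. (\<lambda>t. q (F t)) integrable_on {0..}
              \<and> (\<exists>M. \<forall>x\<ge>0. mrl F x * q (F x) \<le> M)))"
proof -
  interpret density_finite_moment F f r
    using assms by unfold_locales
  show ?thesis
    using hazard_slope_limit_consequences exists_Qdown_integrable_mrl_bounded by blast
qed

end
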